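(* Assume (A1) and (A2) below. Then for any $s\in\mathcal S$ and policy $\pi$, $$\mathbb{E}_{p\sim\Phi_t}\Big[\mathbb{V}_{a,s'\sim\pi,p}\big[V^{\pi,p}(s')\big]-\mathbb{V}_{a,s'\sim\pi,p}\big[\bar V^\pi_t(s')\big]\Big]\ge 0.$$
   Context: Let $\mathcal S$ be a finite state space, $\mathcal A$ a finite action space, $r:\mathcal S\times\mathcal A\to\mathbb R$ a known bounded (deterministic) reward function and $\gamma\in[0,1)$ a discount factor. A transition function $p$ assigns to each $(s,a)$ a probability distribution $p(\cdot\mid s,a)$ on $\mathcal S$. A policy $\pi$ gives distributions $\pi(\cdot\mid s)$ on $\mathcal A$. For a transition function $p$, the value function is $V^{\pi,p}(s)=\mathbb E\big[\sum_{h\ge 0}\gamma^h r(s_h,a_h)\mid s_0=s\big]$ with $a_h\sim\pi(\cdot\mid s_h)$, $s_{h+1}\sim p(\cdot\mid s_h,a_h)$. The transition function $p$ is a random variable with distribution $\Phi_t$, and $\bar V^\pi_t(s)=\mathbb E_{p\sim\Phi_t}[V^{\pi,p}(s)]$. For a transition function $q$ and a function $f$ on $\mathcal S$, $\mathbb V_{a,s'\sim\pi,q}[f(s')]$ denotes the variance of $f(s')$ when $a\sim\pi(\cdot\mid s)$ and $s'\sim q(\cdot\mid s,a)$. Assumptions: (A1) (independent transitions) $p(s'\mid x,a)$ and $p(s'\mid y,a)$ are independent random variables if $x\neq y$; (A2) (acyclic MDP) the MDP is a directed acyclic graph, i.e., states are not visited more than once in any given episode. *)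

theory Defs
  imports "HOL-Probability.Probability"
begin

text \<open>A transition function is q :: 's => 'a => 's => real, q x a y = p(y | x, a).
  A policy is pi :: 's => 'a => real, pi s a = pi(a | s).\<close>

definition valid_policy :: "('s::finite \<Rightarrow> 'a::finite \<Rightarrow> real) \<Rightarrow> bool" where
  "valid_policy \<pi> \<longleftrightarrow> (\<forall>s a. 0 \<le> \<pi> s a) \<and> (\<forall>s. (\<Sum>a\<in>UNIV. \<pi> s a) = 1)"

definition valid_transition :: "('s::finite \<Rightarrow> 'a::finite \<Rightarrow> 's \<Rightarrow> real) \<Rightarrow> bool" where
  "valid_transition q \<longleftrightarrow> (\<forall>x a y. 0 \<le> q x a y) \<and> (\<forall>x a. (\<Sum>y\<in>UNIV. q x a y) = 1)"

definition r_pi :: "('s::finite \<Rightarrow> 'a::finite \<Rightarrow> real) \<Rightarrow> ('s \<Rightarrow> 'a \<Rightarrow> real) \<Rightarrow> 's \<Rightarrow> real" where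
  "r_pi r \<pi> s = (\<Sum>a\<in>UNIV. \<pi> s a * r s a)"

definition step_op :: "('s::finite \<Rightarrow> 'a::finite \<Rightarrow> real) \<Rightarrow> ('s \<Rightarrow> 'a \<Rightarrow> 's \<Rightarrow> real)
    \<Rightarrow> ('s \<Rightarrow> real) \<Rightarrow> 's \<Rightarrow> real" where
  "step_op \<pi> q f s = (\<Sum>a\<in>UNIV. \<Sum>s'\<in>UNIV. \<pi> s a * q s a s' * f s')"

text \<open>Value function V^{pi,q}(s) = E[ sum_h gamma^h r(s_h,a_h) | s_0 = s ]
  = sum_h gamma^h E[r(s_h,a_h) | s_0 = s].\<close>
definition value_fun :: "('s::finite \<Rightarrow> 'a::finite \<Rightarrow> real) \<Rightarrow> real \<Rightarrow>
    ('s \<Rightarrow> 'a \<Rightarrow> real) \<Rightarrow> ('s \<Rightarrow> 'a \<Rightarrow> 's \<Rightarrow> real) \<Rightarrow> 's \<Rightarrow> real" where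
  "value_fun r \<gamma> \<pi> q s = (\<Sum>h. \<gamma> ^ h * (((step_op \<pi> q) ^^ h) (r_pi r \<pi>)) s)"

definition var_next :: "('s::finite \<Rightarrow> 'a::finite \<Rightarrow> real) \<Rightarrow> ('s \<Rightarrow> 'a \<Rightarrow> 's \<Rightarrow> real)
    \<Rightarrow> ('s \<Rightarrow> real) \<Rightarrow> 's \<Rightarrow> real" where
  "var_next \<pi> q f s =
     (\<Sum>a\<in>UNIV. \<Sum>s'\<in>UNIV. \<pi> s a * q s a s' * (f s' - step_op \<pi> q f s)\<^sup>2)"

text \<open>(A1) independent transitions: the random rows P(.|x,.) for distinct
  states x are (mutually) independent random variables.\<close>
definition indep_transitions :: "'w measure \<Rightarrow> ('w \<Rightarrow> 's::finite \<Rightarrow> 'a::finite \<Rightarrow> 's \<Rightarrow> real) \<Rightarrow> bool" where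
  "indep_transitions M P \<longleftrightarrow>
     prob_space.indep_vars M (\<lambda>_. PiM UNIV (\<lambda>_. PiM UNIV (\<lambda>_. borel))) (\<lambda>x \<omega>. P \<omega> x) UNIV"

text \<open>(A2) acyclic MDP: there is a ranking of the states such that every transition
  of positive probability (for every realisation of P) strictly increases the rank,
  except self-loops at terminal (deterministically absorbing) states.\<close>
definition terminal_state :: "'w measure \<Rightarrow> ('w \<Rightarrow> 's \<Rightarrow> 'a \<Rightarrow> 's \<Rightarrow> real) \<Rightarrow> 's \<Rightarrow> bool" where
  "terminal_state M P x \<longleftrightarrow> (\<forall>\<omega>\<in>space M. \<forall>a. P \<omega> x a x = 1)"

definition acyclic_mdp :: "'w measure \<Rightarrow> ('w \<Rightarrow> 's \<Rightarrow> 'a \<Rightarrow> 's \<Rightarrow> real) \<Rightarrow> bool" where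
  "acyclic_mdp M P \<longleftrightarrow> (\<exists>\<rho> :: 's \<Rightarrow> nat. \<forall>\<omega>\<in>space M. \<forall>x a y.
      0 < P \<omega> x a y \<longrightarrow> \<rho> x < \<rho> y \<or> (y = x \<and> terminal_state M P x))"

end

theory Submission
  imports Defs
begin

(* If s is terminal, the next state is deterministic and both variances vanish. Otherwise let U be
   the states of higher rank than s. By (A2) every successor of s lies in U and U is closed under
   transitions, so on U the value function depends only on the rows of P at states of U; by (A1)
   these are independent of the row at s, hence of the next-state distribution mu. Independence
   turns E[Var_mu(V)] into the average over mu of E[Var_m(V)] for fixed weights m, and for fixed m
   the convexity inequality Var_m(E V) <= E[Var_m(V)] holds. *)

section \<open>Variance under finite weights\<close>

definition weighted_variance :: "('s::finite \<Rightarrow> real) \<Rightarrow> ('s \<Rightarrow> real) \<Rightarrow> real" where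
  "weighted_variance m f = (\<Sum>y\<in>UNIV. m y * (f y - (\<Sum>z\<in>UNIV. m z * f z))\<^sup>2)"

lemma weighted_variance_nonneg: "(\<And>y. 0 \<le> m y) \<Longrightarrow> 0 \<le> weighted_variance m f"
  unfolding weighted_variance_def by (intro sum_nonneg) simp

lemma weighted_variance_eq_second_moment:
  assumes "sum m UNIV = 1"
  shows "weighted_variance m f = (\<Sum>y\<in>UNIV. m y * (f y)\<^sup>2) - (\<Sum>y\<in>UNIV. m y * f y)\<^sup>2"
proof -
  let ?c = "\<Sum>y\<in>UNIV. m y * f y"
  have "weighted_variance m f = (\<Sum>y\<in>UNIV. m y * (f y)\<^sup>2 - 2 * ?c * (m y * f y) + ?c\<^sup>2 * m y)"
    unfolding weighted_variance_def by (intro sum.cong refl) (simp add: power2_eq_square algebra_simps)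
  also have "\<dots> = (\<Sum>y\<in>UNIV. m y * (f y)\<^sup>2) - 2 * ?c * ?c + ?c\<^sup>2 * sum m UNIV"
    by (simp add: sum.distrib sum_subtractf sum_distrib_left)
  also have "\<dots> = (\<Sum>y\<in>UNIV. m y * (f y)\<^sup>2) - ?c\<^sup>2"
    using assms by (simp add: power2_eq_square)
  finally show ?thesis .
qed

lemma weighted_variance_eq_quadratic_form:
  assumes "sum m UNIV = 1"
  shows "weighted_variance m f
    = (\<Sum>y\<in>UNIV. m y * (f y * f y)) - (\<Sum>y\<in>UNIV. \<Sum>z\<in>UNIV. (m y * m z) * (f y * f z))"
  unfolding weighted_variance_eq_second_moment[OF assms] power2_eq_square sum_product
  by (simp add: mult_ac)

lemma weighted_variance_add:
  assumes "sum m UNIV = 1"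
  shows "weighted_variance m (\<lambda>y. f y + g y) = weighted_variance m f + weighted_variance m g
           + 2 * (\<Sum>y\<in>UNIV. m y * (f y - (\<Sum>z\<in>UNIV. m z * f z)) * g y)"
proof -
  let ?c = "\<Sum>z\<in>UNIV. m z * f z"
  have square: "(\<Sum>y\<in>UNIV. m y * (f y + g y)\<^sup>2) = (\<Sum>y\<in>UNIV. m y * (f y)\<^sup>2)
      + 2 * (\<Sum>y\<in>UNIV. m y * f y * g y) + (\<Sum>y\<in>UNIV. m y * (g y)\<^sup>2)"
    by (simp add: power2_eq_square algebra_simps sum.distrib sum_distrib_left)
  have mean: "(\<Sum>y\<in>UNIV. m y * (f y + g y)) = ?c + (\<Sum>y\<in>UNIV. m y * g y)"
    by (simp add: distrib_left sum.distrib)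
  have cross: "(\<Sum>y\<in>UNIV. m y * (f y - ?c) * g y) = (\<Sum>y\<in>UNIV. m y * f y * g y) - ?c * (\<Sum>y\<in>UNIV. m y * g y)"
    by (simp add: algebra_simps sum_subtractf sum_distrib_left)
  show ?thesis
    unfolding weighted_variance_eq_second_moment[OF assms] square mean cross
    by (simp add: power2_eq_square algebra_simps)
qed

lemma weighted_variance_cong:
  assumes "\<And>y. m y \<noteq> 0 \<Longrightarrow> f y = g y"
  shows "weighted_variance m f = weighted_variance m g"
proof -
  have eq: "m y * f y = m y * g y" "m y * (f y - c)\<^sup>2 = m y * (g y - c)\<^sup>2" for y c
    using assms by (cases "m y = 0"; simp)+
  have mean: "(\<Sum>z\<in>UNIV. m z * f z) = (\<Sum>z\<in>UNIV. m z * g z)"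
    by (intro sum.cong refl eq(1))
  show ?thesis
    unfolding weighted_variance_def mean by (intro sum.cong refl eq(2))
qed

lemma weighted_variance_point_mass: "weighted_variance (\<lambda>y. if y = x then 1 else 0) f = 0"
  unfolding weighted_variance_def by (simp add: if_distrib[of "\<lambda>c. c * _"] cong: if_cong)

section \<open>Bounded random variables\<close>

definition bounded_rv :: "'w measure \<Rightarrow> ('w \<Rightarrow> real) \<Rightarrow> bool" where
  "bounded_rv M f \<longleftrightarrow> f \<in> borel_measurable M \<and> (\<exists>B. \<forall>x\<in>space M. \<bar>f x\<bar> \<le> B)"

lemma bounded_rv_const[intro]: "bounded_rv M (\<lambda>x. c)"
  unfolding bounded_rv_def by auto

lemma bounded_rv_add[intro]: "bounded_rv M f \<Longrightarrow> bounded_rv M g \<Longrightarrow> bounded_rv M (\<lambda>x. f x + g x)"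
  unfolding bounded_rv_def
proof (elim conjE exE, intro conjI)
  fix B1 B2 assume "\<forall>x\<in>space M. \<bar>f x\<bar> \<le> B1" "\<forall>x\<in>space M. \<bar>g x\<bar> \<le> B2"
  then show "\<exists>B. \<forall>x\<in>space M. \<bar>f x + g x\<bar> \<le> B"
    by (intro exI[of _ "B1 + B2"]) (auto intro: order_trans[OF abs_triangle_ineq] add_mono)
qed auto

lemma bounded_rv_diff[intro]: "bounded_rv M f \<Longrightarrow> bounded_rv M g \<Longrightarrow> bounded_rv M (\<lambda>x. f x - g x)"
  unfolding bounded_rv_def
proof (elim conjE exE, intro conjI)
  fix B1 B2 assume "\<forall>x\<in>space M. \<bar>f x\<bar> \<le> B1" "\<forall>x\<in>space M. \<bar>g x\<bar> \<le> B2"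
  then show "\<exists>B. \<forall>x\<in>space M. \<bar>f x - g x\<bar> \<le> B"
    by (intro exI[of _ "B1 + B2"]) (auto intro: order_trans[OF abs_triangle_ineq4] add_mono)
qed auto

lemma bounded_rv_mult[intro]: "bounded_rv M f \<Longrightarrow> bounded_rv M g \<Longrightarrow> bounded_rv M (\<lambda>x. f x * g x)"
  unfolding bounded_rv_def
proof (elim conjE exE, intro conjI)
  fix B1 B2 assume b: "\<forall>x\<in>space M. \<bar>f x\<bar> \<le> B1" "\<forall>x\<in>space M. \<bar>g x\<bar> \<le> B2"
  show "\<exists>B. \<forall>x\<in>space M. \<bar>f x * g x\<bar> \<le> B"
  proof (intro exI[of _ "B1 * B2"] ballI)
    fix x assume "x \<in> space M"
    with b have "\<bar>f x\<bar> \<le> B1" "\<bar>g x\<bar> \<le> B2" by auto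
    then show "\<bar>f x * g x\<bar> \<le> B1 * B2"
      unfolding abs_mult by (intro mult_mono) auto
  qed
qed auto

lemma bounded_rv_power2[intro]: "bounded_rv M f \<Longrightarrow> bounded_rv M (\<lambda>x. (f x)\<^sup>2)"
  unfolding power2_eq_square by (rule bounded_rv_mult)

lemma bounded_rv_sum[intro]: "(\<And>i. i \<in> I \<Longrightarrow> bounded_rv M (f i)) \<Longrightarrow> bounded_rv M (\<lambda>x. \<Sum>i\<in>I. f i x)"
proof (induction I rule: infinite_finite_induct)
  case (insert i I)
  then show ?case using bounded_rv_add[of M "f i" "\<lambda>x. \<Sum>i\<in>I. f i x"] by simp
qed auto

lemma (in finite_measure) bounded_rv_integrable:
  assumes "bounded_rv M f"
  shows "integrable M f"
proof -
  obtain B where "f \<in> borel_measurable M" "\<forall>x\<in>space M. \<bar>f x\<bar> \<le> B"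
    using assms unfolding bounded_rv_def by blast
  then show ?thesis by (intro integrable_const_bound[where B=B]) auto
qed

lemma bounded_rv_weighted_variance:
  assumes "\<And>y. bounded_rv M (\<lambda>\<omega>. m \<omega> y)" "\<And>y. bounded_rv M (\<lambda>\<omega>. f \<omega> y)"
  shows "bounded_rv M (\<lambda>\<omega>. weighted_variance (m \<omega>) (f \<omega>))"
  unfolding weighted_variance_def
  by (intro bounded_rv_sum bounded_rv_mult bounded_rv_power2 bounded_rv_diff assms)

lemma bounded_rv_prob_vector:
  assumes "(\<lambda>\<omega>. \<mu> \<omega> y) \<in> borel_measurable M"
    and "\<And>\<omega> y. \<omega> \<in> space M \<Longrightarrow> 0 \<le> \<mu> \<omega> y" "\<And>\<omega>. \<omega> \<in> space M \<Longrightarrow> sum (\<mu> \<omega>) UNIV = 1"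
  shows "bounded_rv M (\<lambda>\<omega>. \<mu> \<omega> (y::'s::finite))"
  unfolding bounded_rv_def
proof (intro conjI exI[of _ 1] ballI)
  fix \<omega> assume "\<omega> \<in> space M"
  then show "\<bar>\<mu> \<omega> y\<bar> \<le> 1"
    using member_le_sum[of y UNIV "\<mu> \<omega>"] assms(2,3) by auto
qed fact

section \<open>Variance of the mean\<close>

lemma (in prob_space) weighted_variance_expectation_le:
  fixes F :: "'a \<Rightarrow> 's::finite \<Rightarrow> real"
  assumes F: "\<And>y. bounded_rv M (\<lambda>\<omega>. F \<omega> y)" and m: "\<And>y. 0 \<le> m y" "sum m UNIV = 1"
  shows "weighted_variance m (\<lambda>y. expectation (\<lambda>\<omega>. F \<omega> y))
           \<le> expectation (\<lambda>\<omega>. weighted_variance m (F \<omega>))"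
proof -
  define Fb where "Fb y = expectation (\<lambda>\<omega>. F \<omega> y)" for y
  define D where "D \<omega> y = F \<omega> y - Fb y" for \<omega> y
  define c where "c y = m y * (Fb y - (\<Sum>z\<in>UNIV. m z * Fb z))" for y
  \<comment> \<open>The cross term of \<open>F = Fb + D\<close> is linear in the centred \<open>D\<close>, so it has mean 0.\<close>
  have D: "bounded_rv M (\<lambda>\<omega>. D \<omega> y)" for y
    unfolding D_def using F by auto
  have D_mean: "expectation (\<lambda>\<omega>. D \<omega> y) = 0" for y
    unfolding D_def Fb_def using bounded_rv_integrable[OF F] by (simp add: prob_space)
  have split: "weighted_variance m (F \<omega>)
      = weighted_variance m Fb + weighted_variance m (D \<omega>) + 2 * (\<Sum>y\<in>UNIV. c y * D \<omega> y)" for \<omega>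
  proof -
    have "F \<omega> = (\<lambda>y. Fb y + D \<omega> y)" unfolding D_def by auto
    then show ?thesis using weighted_variance_add[OF m(2), of Fb "D \<omega>"] by (simp add: c_def)
  qed
  have "expectation (\<lambda>\<omega>. weighted_variance m (F \<omega>))
      = weighted_variance m Fb + expectation (\<lambda>\<omega>. weighted_variance m (D \<omega>))
        + 2 * (\<Sum>y\<in>UNIV. c y * expectation (\<lambda>\<omega>. D \<omega> y))"
  proof -
    have "integrable M (\<lambda>\<omega>. weighted_variance m (D \<omega>))"
      by (intro bounded_rv_integrable bounded_rv_weighted_variance bounded_rv_const D)
    moreover have "integrable M (\<lambda>\<omega>. D \<omega> y)" for y
      using D by (rule bounded_rv_integrable)
    ultimately show ?thesis
      unfolding split by (simp add: integrable_sum prob_space sum_distrib_left)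
  qed
  also have "\<dots> = weighted_variance m Fb + expectation (\<lambda>\<omega>. weighted_variance m (D \<omega>))"
    by (simp add: D_mean)
  finally show ?thesis
    unfolding Fb_def[symmetric]
    using integral_nonneg_AE[OF AE_I2[OF weighted_variance_nonneg[OF m(1)]]] by simp
qed

lemma (in prob_space) expectation_weighted_variance:
  assumes "sum m UNIV = 1" and V: "\<And>y. bounded_rv M (\<lambda>\<omega>. V \<omega> y)"
  shows "expectation (\<lambda>\<omega>. weighted_variance m (V \<omega>))
    = (\<Sum>y\<in>UNIV. m y * expectation (\<lambda>\<omega>. V \<omega> y * V \<omega> y))
      - (\<Sum>y\<in>UNIV. \<Sum>z\<in>UNIV. (m y * m z) * expectation (\<lambda>\<omega>. V \<omega> y * V \<omega> z))"
proof -
  have "integrable M (\<lambda>\<omega>. V \<omega> y * V \<omega> z)" for y z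
    by (intro bounded_rv_integrable bounded_rv_mult V)
  then show ?thesis
    unfolding weighted_variance_eq_quadratic_form[OF assms(1)] by (simp add: integrable_sum)
qed

lemma (in prob_space) expectation_weighted_variance_indep:
  fixes \<mu> V :: "'a \<Rightarrow> 's::finite \<Rightarrow> real"
  assumes indep: "indep_var (PiM UNIV (\<lambda>_. borel)) \<mu> (PiM UNIV (\<lambda>_. borel)) V"
    and \<mu>: "\<And>y. bounded_rv M (\<lambda>\<omega>. \<mu> \<omega> y)" "\<And>\<omega>. \<omega> \<in> space M \<Longrightarrow> sum (\<mu> \<omega>) UNIV = 1"
    and V: "\<And>y. bounded_rv M (\<lambda>\<omega>. V \<omega> y)"
  shows "expectation (\<lambda>\<omega>. weighted_variance (\<mu> \<omega>) (V \<omega>))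
    = expectation (\<lambda>\<omega>. expectation (\<lambda>\<omega>'. weighted_variance (\<mu> \<omega>) (V \<omega>')))"
proof -
  \<comment> \<open>\<open>weighted_variance m v\<close> is a quadratic form in \<open>v\<close> with coefficients polynomial in \<open>m\<close>,
    so independence factorises its expectation term by term.\<close>
  have factor: "expectation (\<lambda>\<omega>. \<Phi> (\<mu> \<omega>) * \<Psi> (V \<omega>))
      = expectation (\<lambda>\<omega>. \<Phi> (\<mu> \<omega>)) * expectation (\<lambda>\<omega>. \<Psi> (V \<omega>))"
    if "\<Phi> \<in> borel_measurable (PiM UNIV (\<lambda>_. borel))" "\<Psi> \<in> borel_measurable (PiM UNIV (\<lambda>_. borel))"
      and "bounded_rv M (\<lambda>\<omega>. \<Phi> (\<mu> \<omega>))" "bounded_rv M (\<lambda>\<omega>. \<Psi> (V \<omega>))" for \<Phi> \<Psi>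
  proof -
    have "indep_var borel (\<lambda>\<omega>. \<Phi> (\<mu> \<omega>)) borel (\<lambda>\<omega>. \<Psi> (V \<omega>))"
      using indep_var_compose[OF indep that(1,2)] by (simp add: comp_def)
    then show ?thesis by (intro indep_var_lebesgue_integral bounded_rv_integrable that(3,4))
  qed
  define C where "C y z = expectation (\<lambda>\<omega>. V \<omega> y * V \<omega> z)" for y z
  have "integrable M (\<lambda>\<omega>. \<mu> \<omega> y * (V \<omega> y * V \<omega> y))"
    "integrable M (\<lambda>\<omega>. (\<mu> \<omega> y * \<mu> \<omega> z) * (V \<omega> y * V \<omega> z))"
    "integrable M (\<lambda>\<omega>. \<mu> \<omega> y)" "integrable M (\<lambda>\<omega>. \<mu> \<omega> y * \<mu> \<omega> z)" for y z
    by (intro bounded_rv_integrable bounded_rv_mult \<mu> V)+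
  moreover have "expectation (\<lambda>\<omega>. \<mu> \<omega> y * (V \<omega> y * V \<omega> y)) = expectation (\<lambda>\<omega>. \<mu> \<omega> y) * C y y"
    for y
    unfolding C_def
    by (rule factor[of "\<lambda>m. m y" "\<lambda>v. v y * v y"]) (measurable, (intro \<mu> bounded_rv_mult V)+)
  moreover have "expectation (\<lambda>\<omega>. (\<mu> \<omega> y * \<mu> \<omega> z) * (V \<omega> y * V \<omega> z))
      = expectation (\<lambda>\<omega>. \<mu> \<omega> y * \<mu> \<omega> z) * C y z" for y z
    unfolding C_def
    by (rule factor[of "\<lambda>m. m y * m z" "\<lambda>v. v y * v z"]) (measurable, (intro bounded_rv_mult \<mu> V)+)
  ultimately have "expectation (\<lambda>\<omega>. (\<Sum>y\<in>UNIV. \<mu> \<omega> y * (V \<omega> y * V \<omega> y))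
        - (\<Sum>y\<in>UNIV. \<Sum>z\<in>UNIV. (\<mu> \<omega> y * \<mu> \<omega> z) * (V \<omega> y * V \<omega> z)))
      = expectation (\<lambda>\<omega>. (\<Sum>y\<in>UNIV. \<mu> \<omega> y * C y y)
        - (\<Sum>y\<in>UNIV. \<Sum>z\<in>UNIV. (\<mu> \<omega> y * \<mu> \<omega> z) * C y z))"
    by (simp add: integrable_sum)
  moreover have "weighted_variance (\<mu> \<omega>) (V \<omega>) = (\<Sum>y\<in>UNIV. \<mu> \<omega> y * (V \<omega> y * V \<omega> y))
        - (\<Sum>y\<in>UNIV. \<Sum>z\<in>UNIV. (\<mu> \<omega> y * \<mu> \<omega> z) * (V \<omega> y * V \<omega> z))"
      "expectation (\<lambda>\<omega>'. weighted_variance (\<mu> \<omega>) (V \<omega>')) = (\<Sum>y\<in>UNIV. \<mu> \<omega> y * C y y)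
        - (\<Sum>y\<in>UNIV. \<Sum>z\<in>UNIV. (\<mu> \<omega> y * \<mu> \<omega> z) * C y z)"
    if "\<omega> \<in> space M" for \<omega>
    unfolding C_def
    by (rule weighted_variance_eq_quadratic_form expectation_weighted_variance \<mu>(2)[OF that] V)+
  ultimately show ?thesis
    by (simp cong: Bochner_Integration.integral_cong)
qed

lemma (in prob_space) weighted_variance_expectation_le_indep:
  fixes \<mu> V :: "'a \<Rightarrow> 's::finite \<Rightarrow> real"
  assumes indep: "indep_var (PiM UNIV (\<lambda>_. borel)) \<mu> (PiM UNIV (\<lambda>_. borel)) V"
    and V: "\<And>y. bounded_rv M (\<lambda>\<omega>. V \<omega> y)"
    and \<mu>_nonneg: "\<And>\<omega> y. \<omega> \<in> space M \<Longrightarrow> 0 \<le> \<mu> \<omega> y"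
    and \<mu>_sum: "\<And>\<omega>. \<omega> \<in> space M \<Longrightarrow> sum (\<mu> \<omega>) UNIV = 1"
  shows "0 \<le> expectation (\<lambda>\<omega>. weighted_variance (\<mu> \<omega>) (V \<omega>)
                - weighted_variance (\<mu> \<omega>) (\<lambda>y. expectation (\<lambda>\<omega>'. V \<omega>' y)))"
proof -
  have "(\<lambda>\<omega>. \<mu> \<omega> y) \<in> borel_measurable M" for y
    using indep_var_rv1[OF indep] by measurable
  then have \<mu>: "bounded_rv M (\<lambda>\<omega>. \<mu> \<omega> y)" for y
    using \<mu>_nonneg \<mu>_sum by (rule bounded_rv_prob_vector)
  let ?K = "\<lambda>\<omega>. expectation (\<lambda>\<omega>'. weighted_variance (\<mu> \<omega>) (V \<omega>'))"
  let ?Q = "\<lambda>\<omega>. (\<Sum>y\<in>UNIV. \<mu> \<omega> y * expectation (\<lambda>\<omega>. V \<omega> y * V \<omega> y))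
      - (\<Sum>y\<in>UNIV. \<Sum>z\<in>UNIV. (\<mu> \<omega> y * \<mu> \<omega> z) * expectation (\<lambda>\<omega>. V \<omega> y * V \<omega> z))"
  have "integrable M ?Q"
    by (intro bounded_rv_integrable bounded_rv_diff bounded_rv_sum bounded_rv_mult bounded_rv_const \<mu>)
  moreover have "?K \<omega> = ?Q \<omega>" if "\<omega> \<in> space M" for \<omega>
    by (rule expectation_weighted_variance[OF \<mu>_sum[OF that] V])
  ultimately have "integrable M ?K"
    using Bochner_Integration.integrable_cong[of M M ?K ?Q] by simp
  moreover have "weighted_variance (\<mu> \<omega>) (\<lambda>y. expectation (\<lambda>\<omega>'. V \<omega>' y)) \<le> ?K \<omega>"
    if "\<omega> \<in> space M" for \<omega>
    by (rule weighted_variance_expectation_le[OF V \<mu>_nonneg[OF that] \<mu>_sum[OF that]])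
  ultimately have "expectation (\<lambda>\<omega>. weighted_variance (\<mu> \<omega>) (\<lambda>y. expectation (\<lambda>\<omega>'. V \<omega>' y)))
      \<le> expectation ?K"
    by (intro integral_mono[OF bounded_rv_integrable[OF bounded_rv_weighted_variance[of M \<mu>, OF \<mu> bounded_rv_const]]])
  then show ?thesis
    using expectation_weighted_variance_indep[OF indep \<mu> \<mu>_sum V]
      bounded_rv_integrable[OF bounded_rv_weighted_variance[of M \<mu> V, OF \<mu> V]]
      bounded_rv_integrable[OF bounded_rv_weighted_variance[of M \<mu>, OF \<mu> bounded_rv_const]]
    by simp
qed

section \<open>The Markov decision process\<close>

definition next_state_prob :: "('s::finite \<Rightarrow> 'a::finite \<Rightarrow> real) \<Rightarrow> ('s \<Rightarrow> 'a \<Rightarrow> 's \<Rightarrow> real)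
    \<Rightarrow> 's \<Rightarrow> 's \<Rightarrow> real" where
  "next_state_prob \<pi> q s y = (\<Sum>a\<in>UNIV. \<pi> s a * q s a y)"

lemma step_op_eq_next_state_prob:
  "step_op \<pi> q f s = (\<Sum>y\<in>UNIV. next_state_prob \<pi> q s y * f y)"
  unfolding step_op_def next_state_prob_def by (subst sum.swap) (simp add: sum_distrib_right)

lemma var_next_eq_weighted_variance:
  "var_next \<pi> q f s = weighted_variance (next_state_prob \<pi> q s) f"
  unfolding var_next_def weighted_variance_def step_op_eq_next_state_prob
  by (subst sum.swap) (simp add: next_state_prob_def sum_distrib_right)

lemma
  assumes "valid_policy \<pi>" "valid_transition q"
  shows next_state_prob_nonneg: "0 \<le> next_state_prob \<pi> q s y"
    and sum_next_state_prob: "sum (next_state_prob \<pi> q s) UNIV = 1"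
proof -
  show "0 \<le> next_state_prob \<pi> q s y"
    using assms unfolding next_state_prob_def valid_policy_def valid_transition_def
    by (intro sum_nonneg) simp
  have "sum (next_state_prob \<pi> q s) UNIV = (\<Sum>a\<in>UNIV. \<pi> s a * (\<Sum>y\<in>UNIV. q s a y))"
    unfolding next_state_prob_def by (subst sum.swap) (simp add: sum_distrib_left)
  then show "sum (next_state_prob \<pi> q s) UNIV = 1"
    using assms unfolding valid_policy_def valid_transition_def by simp
qed

lemma var_next_absorbing:
  assumes "valid_policy \<pi>" "valid_transition q" and absorbing: "\<And>a. q s a s = 1"
  shows "var_next \<pi> q f s = 0"
proof -
  have "q s a y = 0" if "y \<noteq> s" for a y
  proof -
    have "(\<Sum>y\<in>UNIV - {s}. q s a y) = (\<Sum>y\<in>UNIV. q s a y) - q s a s"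
      by (simp add: sum_diff1)
    then have "(\<Sum>y\<in>UNIV - {s}. q s a y) = 0"
      using assms(2) absorbing unfolding valid_transition_def by simp
    then show ?thesis
      using assms(2) that unfolding valid_transition_def by (simp add: sum_nonneg_eq_0_iff)
  qed
  then have "next_state_prob \<pi> q s = (\<lambda>y. if y = s then 1 else 0)"
    using assms(1) absorbing unfolding next_state_prob_def valid_policy_def by auto
  then show ?thesis
    by (simp add: var_next_eq_weighted_variance weighted_variance_point_mass)
qed

lemma funpow_step_op_measurable:
  assumes "\<And>x a y. (\<lambda>\<omega>. q \<omega> x a y) \<in> borel_measurable N"
  shows "(\<lambda>\<omega>. ((step_op \<pi> (q \<omega>)) ^^ h) f x) \<in> borel_measurable N"
proof (induction h arbitrary: x)
  case (Suc h)
  have "(\<lambda>\<omega>. ((step_op \<pi> (q \<omega>)) ^^ Suc h) f x) =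
     (\<lambda>\<omega>. \<Sum>a\<in>UNIV. \<Sum>y\<in>UNIV. \<pi> x a * q \<omega> x a y * ((step_op \<pi> (q \<omega>)) ^^ h) f y)"
    by (simp add: step_op_def)
  also have "\<dots> \<in> borel_measurable N" using Suc assms by measurable
  finally show ?case .
qed simp

lemma value_fun_measurable:
  assumes "\<And>x a y. (\<lambda>\<omega>. q \<omega> x a y) \<in> borel_measurable N"
  shows "(\<lambda>\<omega>. value_fun r \<gamma> \<pi> (q \<omega>) x) \<in> borel_measurable N"
  unfolding value_fun_def
  by (intro borel_measurable_suminf borel_measurable_times borel_measurable_const
      funpow_step_op_measurable assms)

lemma r_pi_abs_le:
  assumes "valid_policy \<pi>"
  shows "\<bar>r_pi r \<pi> x\<bar> \<le> (\<Sum>x\<in>UNIV. \<Sum>a\<in>UNIV. \<bar>r x a\<bar>)"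
proof -
  have \<pi>_le_1: "\<pi> x a \<le> 1" for a
    using assms member_le_sum[of a UNIV "\<pi> x"] unfolding valid_policy_def by auto
  have "\<bar>r_pi r \<pi> x\<bar> \<le> (\<Sum>a\<in>UNIV. \<bar>\<pi> x a * r x a\<bar>)"
    unfolding r_pi_def by (rule sum_abs)
  also have "\<dots> \<le> (\<Sum>a\<in>UNIV. \<bar>r x a\<bar>)"
    using assms \<pi>_le_1 unfolding valid_policy_def
    by (intro sum_mono) (simp add: abs_mult mult_left_le_one_le)
  also have "\<dots> \<le> (\<Sum>x\<in>UNIV. \<Sum>a\<in>UNIV. \<bar>r x a\<bar>)"
    by (rule member_le_sum[where f = "\<lambda>x. \<Sum>a\<in>UNIV. \<bar>r x a\<bar>"]) (auto intro: sum_nonneg)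
  finally show ?thesis .
qed

lemma step_op_abs_le:
  assumes "valid_policy \<pi>" "valid_transition q" "\<And>y. \<bar>f y\<bar> \<le> B"
  shows "\<bar>step_op \<pi> q f x\<bar> \<le> B"
proof -
  have "\<bar>step_op \<pi> q f x\<bar> \<le> (\<Sum>y\<in>UNIV. \<bar>next_state_prob \<pi> q x y * f y\<bar>)"
    unfolding step_op_eq_next_state_prob by (rule sum_abs)
  also have "\<dots> = (\<Sum>y\<in>UNIV. next_state_prob \<pi> q x y * \<bar>f y\<bar>)"
    using next_state_prob_nonneg[OF assms(1,2)] by (simp add: abs_mult)
  also have "\<dots> \<le> (\<Sum>y\<in>UNIV. next_state_prob \<pi> q x y * B)"
    using next_state_prob_nonneg[OF assms(1,2)] assms(3) by (intro sum_mono mult_left_mono) auto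
  also have "\<dots> = B"
    using sum_next_state_prob[OF assms(1,2)] by (simp add: sum_distrib_right[symmetric])
  finally show ?thesis .
qed

lemma value_fun_abs_le:
  assumes "valid_policy \<pi>" "valid_transition q" "0 \<le> \<gamma>" "\<gamma> < 1"
  shows "\<bar>value_fun r \<gamma> \<pi> q x\<bar> \<le> (\<Sum>x\<in>UNIV. \<Sum>a\<in>UNIV. \<bar>r x a\<bar>) / (1 - \<gamma>)"
proof -
  define R where "R = (\<Sum>x\<in>UNIV. \<Sum>a\<in>UNIV. \<bar>r x a\<bar>)"
  let ?f = "\<lambda>h. \<gamma> ^ h * ((step_op \<pi> q) ^^ h) (r_pi r \<pi>) x"
  have "\<bar>((step_op \<pi> q) ^^ h) (r_pi r \<pi>) y\<bar> \<le> R" for h y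
    by (induction h arbitrary: y)
      (simp_all add: R_def r_pi_abs_le[OF assms(1)] step_op_abs_le[OF assms(1,2)])
  then have term_le: "norm (?f h) \<le> \<gamma> ^ h * R" for h
    using assms(3) by (simp add: abs_mult mult_left_mono)
  have geometric: "summable (\<lambda>h. \<gamma> ^ h * R)"
    using assms by (intro summable_mult2 summable_geometric) auto
  have summable: "summable (\<lambda>h. norm (?f h))"
    by (rule summable_comparison_test'[OF geometric]) (use term_le in simp)
  have "\<bar>value_fun r \<gamma> \<pi> q x\<bar> \<le> (\<Sum>h. norm (?f h))"
    unfolding value_fun_def using summable_norm[OF summable] by simp
  also have "\<dots> \<le> (\<Sum>h. \<gamma> ^ h * R)"
    by (rule suminf_le[OF term_le summable geometric])
  also have "\<dots> = R / (1 - \<gamma>)"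
    using assms by (simp add: suminf_mult2[symmetric, OF summable_geometric] suminf_geometric)
  finally show ?thesis unfolding R_def .
qed

definition successor_closed :: "('s \<Rightarrow> 'a \<Rightarrow> 's \<Rightarrow> real) \<Rightarrow> 's set \<Rightarrow> bool" where
  "successor_closed q U \<longleftrightarrow> (\<forall>x\<in>U. \<forall>a y. q x a y \<noteq> 0 \<longrightarrow> y \<in> U)"

lemma funpow_step_op_cong_closed:
  assumes "\<And>x. x \<in> U \<Longrightarrow> q x = q' x" "successor_closed q U" "x \<in> U"
  shows "((step_op \<pi> q) ^^ h) f x = ((step_op \<pi> q') ^^ h) f x"
  using assms(3)
proof (induction h arbitrary: x)
  case (Suc h)
  have unfold: "((step_op \<pi> p) ^^ Suc h) f x
      = (\<Sum>a\<in>UNIV. \<Sum>y\<in>UNIV. \<pi> x a * p x a y * ((step_op \<pi> p) ^^ h) f y)" for p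
    unfolding funpow.simps comp_def by (rule step_op_def)
  have "\<pi> x a * q x a y * ((step_op \<pi> q) ^^ h) f y = \<pi> x a * q' x a y * ((step_op \<pi> q') ^^ h) f y"
    for a y
    using assms(1,2) Suc unfolding successor_closed_def by (cases "q x a y = 0") auto
  then show ?case
    unfolding unfold by (intro sum.cong refl)
qed simp

(* On a successor-closed U, zeroing the rows outside U does not change the value function on U
   (value_fun_rows_on), but makes it a function of the rows at states of U alone. *)
definition rows_on :: "'s set \<Rightarrow> ('s \<Rightarrow> 'a \<Rightarrow> 's \<Rightarrow> real) \<Rightarrow> 's \<Rightarrow> 'a \<Rightarrow> 's \<Rightarrow> real" where
  "rows_on U q x = (if x \<in> U then q x else (\<lambda>_ _. 0))"

lemma value_fun_rows_on:
  assumes "successor_closed q U" "x \<in> U"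
  shows "value_fun r \<gamma> \<pi> (rows_on U q) x = value_fun r \<gamma> \<pi> q x"
  unfolding value_fun_def
  using funpow_step_op_cong_closed[of U q "rows_on U q", OF _ assms] by (simp add: rows_on_def)

lemma acyclic_mdp_future_states:
  fixes P :: "'w \<Rightarrow> 's \<Rightarrow> 'a \<Rightarrow> 's \<Rightarrow> real"
  assumes "acyclic_mdp M P" "\<not> terminal_state M P s"
    and nonneg: "\<And>\<omega> x a y. \<omega> \<in> space M \<Longrightarrow> 0 \<le> P \<omega> x a y"
  obtains U where "s \<notin> U" "\<And>\<omega> a y. \<omega> \<in> space M \<Longrightarrow> P \<omega> s a y \<noteq> 0 \<Longrightarrow> y \<in> U"
    "\<And>\<omega>. \<omega> \<in> space M \<Longrightarrow> successor_closed (P \<omega>) U"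
proof -
  obtain \<rho> :: "'s \<Rightarrow> nat" where \<rho>: "\<And>\<omega> x a y. \<omega> \<in> space M \<Longrightarrow> P \<omega> x a y \<noteq> 0
      \<Longrightarrow> \<rho> x < \<rho> y \<or> (y = x \<and> terminal_state M P x)"
    using assms(1) nonneg unfolding acyclic_mdp_def by (metis order_less_le)
  show ?thesis
  proof
    show "s \<notin> {y. \<rho> s < \<rho> y}" by simp
    show "y \<in> {y. \<rho> s < \<rho> y}" if "\<omega> \<in> space M" "P \<omega> s a y \<noteq> 0" for \<omega> a y
      using \<rho>[OF that] assms(2) by auto
    show "successor_closed (P \<omega>) {y. \<rho> s < \<rho> y}" if "\<omega> \<in> space M" for \<omega>
      unfolding successor_closed_def using \<rho>[OF that] by fastforce
  qed
qed

lemma measurable_PiM_entry: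
  assumes "x \<in> I"
  shows "(\<lambda>z. z x a y) \<in> borel_measurable (PiM I (\<lambda>_. PiM UNIV (\<lambda>_. PiM UNIV (\<lambda>_. borel))))"
proof -
  have "(\<lambda>row. row a y) \<in> borel_measurable (PiM UNIV (\<lambda>_. PiM UNIV (\<lambda>_. borel)))"
    using measurable_comp[OF measurable_component_singleton[of a UNIV "\<lambda>_. PiM UNIV (\<lambda>_. borel)"]
        measurable_component_singleton[of y UNIV "\<lambda>_. borel"]]
    by (simp add: comp_def)
  then show ?thesis
    using measurable_comp[OF measurable_component_singleton[OF assms]] by (simp add: comp_def)
qed

lemma (in prob_space) indep_next_state_prob_value_fun_rows_on:
  fixes P :: "'a \<Rightarrow> 's::finite \<Rightarrow> 'b::finite \<Rightarrow> 's \<Rightarrow> real"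
  assumes "indep_transitions M P" "s \<notin> U"
  shows "indep_var (PiM UNIV (\<lambda>_. borel)) (\<lambda>\<omega>. next_state_prob \<pi> (P \<omega>) s)
      (PiM UNIV (\<lambda>_. borel)) (\<lambda>\<omega> y. if y \<in> U then value_fun r \<gamma> \<pi> (rows_on U (P \<omega>)) y else 0)"
proof -
  let ?N = "PiM UNIV (\<lambda>_. PiM UNIV (\<lambda>_. borel)) :: ('b \<Rightarrow> 's \<Rightarrow> real) measure"
  let ?X = "\<lambda>A \<omega>. restrict (\<lambda>x. P \<omega> x) A"
  define \<Phi> where "\<Phi> z y = (\<Sum>a\<in>UNIV. \<pi> s a * z s a y)" for z :: "'s \<Rightarrow> 'b \<Rightarrow> 's \<Rightarrow> real" and y
  define \<Psi> where "\<Psi> z y = (if y \<in> U then value_fun r \<gamma> \<pi> (rows_on U z) y else 0)"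
    for z :: "'s \<Rightarrow> 'b \<Rightarrow> 's \<Rightarrow> real" and y
  have "indep_var (PiM {s} (\<lambda>_. ?N)) (?X {s}) (PiM U (\<lambda>_. ?N)) (?X U)"
    using indep_var_restrict[of "\<lambda>_. ?N" "\<lambda>x \<omega>. P \<omega> x" UNIV "{s}" U] assms
    unfolding indep_transitions_def by auto
  moreover have "\<Phi> \<in> PiM {s} (\<lambda>_. ?N) \<rightarrow>\<^sub>M PiM UNIV (\<lambda>_. borel)"
  proof (rule measurable_PiM_single')
    fix y
    have "(\<lambda>z. z s a y) \<in> borel_measurable (PiM {s} (\<lambda>_. ?N))" for a
      by (simp add: measurable_PiM_entry)
    then show "(\<lambda>z. \<Phi> z y) \<in> borel_measurable (PiM {s} (\<lambda>_. ?N))"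
      unfolding \<Phi>_def by measurable
  qed simp
  moreover have "\<Psi> \<in> PiM U (\<lambda>_. ?N) \<rightarrow>\<^sub>M PiM UNIV (\<lambda>_. borel)"
  proof (rule measurable_PiM_single')
    fix y
    have "(\<lambda>z. rows_on U z x a y') \<in> borel_measurable (PiM U (\<lambda>_. ?N))" for x a y'
      unfolding rows_on_def by (cases "x \<in> U") (simp_all add: measurable_PiM_entry)
    then show "(\<lambda>z. \<Psi> z y) \<in> borel_measurable (PiM U (\<lambda>_. ?N))"
      unfolding \<Psi>_def by (cases "y \<in> U") (simp_all add: value_fun_measurable)
  qed simp
  ultimately have "indep_var (PiM UNIV (\<lambda>_. borel)) (\<Phi> \<circ> ?X {s}) (PiM UNIV (\<lambda>_. borel)) (\<Psi> \<circ> ?X U)"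
    by (rule indep_var_compose)
  moreover have "\<Phi> \<circ> ?X {s} = (\<lambda>\<omega>. next_state_prob \<pi> (P \<omega>) s)"
    by (simp add: fun_eq_iff \<Phi>_def next_state_prob_def)
  moreover have "\<Psi> \<circ> ?X U = (\<lambda>\<omega> y. if y \<in> U then value_fun r \<gamma> \<pi> (rows_on U (P \<omega>)) y else 0)"
  proof -
    have rows: "rows_on U (?X U \<omega>) = rows_on U (P \<omega>)" for \<omega>
      by (auto simp: rows_on_def)
    show ?thesis by (simp add: fun_eq_iff \<Psi>_def rows)
  qed
  ultimately show ?thesis by simp
qed

lemma (in prob_space) integral_var_next_value_fun_diff_nonneg:
  fixes P :: "'a \<Rightarrow> 's::finite \<Rightarrow> 'b::finite \<Rightarrow> 's \<Rightarrow> real"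
  assumes P_meas: "\<And>x a y. (\<lambda>\<omega>. P \<omega> x a y) \<in> borel_measurable M"
    and P_valid: "\<And>\<omega>. \<omega> \<in> space M \<Longrightarrow> valid_transition (P \<omega>)"
    and \<gamma>: "0 \<le> \<gamma>" "\<gamma> < 1" and \<pi>: "valid_policy \<pi>" and indep: "indep_transitions M P"
    and U: "s \<notin> U" "\<And>\<omega> a y. \<omega> \<in> space M \<Longrightarrow> P \<omega> s a y \<noteq> 0 \<Longrightarrow> y \<in> U"
      "\<And>\<omega>. \<omega> \<in> space M \<Longrightarrow> successor_closed (P \<omega>) U"
  shows "0 \<le> (\<integral>\<omega>. var_next \<pi> (P \<omega>) (value_fun r \<gamma> \<pi> (P \<omega>)) s
              - var_next \<pi> (P \<omega>) (\<lambda>s'. \<integral>\<omega>'. value_fun r \<gamma> \<pi> (P \<omega>') s' \<partial>M) s \<partial>M)"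
proof -
  define \<mu> where "\<mu> \<omega> = next_state_prob \<pi> (P \<omega>) s" for \<omega>
  define V where "V \<omega> = value_fun r \<gamma> \<pi> (P \<omega>)" for \<omega>
  define W where "W \<omega> y = (if y \<in> U then value_fun r \<gamma> \<pi> (rows_on U (P \<omega>)) y else 0)" for \<omega> y
  have W_eq_V: "W \<omega> y = V \<omega> y" if "\<omega> \<in> space M" "y \<in> U" for \<omega> y
    using value_fun_rows_on[OF U(3)[OF that(1)] that(2)] that(2) by (simp add: W_def V_def)
  have \<mu>_U: "y \<in> U" if "\<omega> \<in> space M" "\<mu> \<omega> y \<noteq> 0" for \<omega> y
  proof (rule ccontr)
    assume "y \<notin> U"
    then have "P \<omega> s a y = 0" for a using U(2)[OF that(1)] by blast
    then show False using that(2) by (simp add: \<mu>_def next_state_prob_def)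
  qed
  have W: "bounded_rv M (\<lambda>\<omega>. W \<omega> y)" for y
  proof -
    have "(\<lambda>\<omega>. rows_on U (P \<omega>) x a y') \<in> borel_measurable M" for x a y'
      using P_meas by (cases "x \<in> U") (simp_all add: rows_on_def)
    then have "(\<lambda>\<omega>. W \<omega> y) \<in> borel_measurable M"
      unfolding W_def by (cases "y \<in> U") (simp_all add: value_fun_measurable)
    moreover have "\<bar>W \<omega> y\<bar> \<le> (\<Sum>x\<in>UNIV. \<Sum>a\<in>UNIV. \<bar>r x a\<bar>) / (1 - \<gamma>)" if "\<omega> \<in> space M" for \<omega>
      using value_fun_abs_le[OF \<pi> P_valid[OF that] \<gamma>, of r y] W_eq_V[OF that, of y] \<gamma>
      by (cases "y \<in> U") (simp_all add: W_def V_def)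
    ultimately show ?thesis unfolding bounded_rv_def by blast
  qed
  have "0 \<le> (\<integral>\<omega>. weighted_variance (\<mu> \<omega>) (W \<omega>) - weighted_variance (\<mu> \<omega>) (\<lambda>y. \<integral>\<omega>'. W \<omega>' y \<partial>M) \<partial>M)"
    using indep_next_state_prob_value_fun_rows_on[OF indep U(1)] W
      next_state_prob_nonneg[OF \<pi> P_valid] sum_next_state_prob[OF \<pi> P_valid]
    unfolding \<mu>_def W_def by (intro weighted_variance_expectation_le_indep) simp_all
  also have "\<dots> = (\<integral>\<omega>. var_next \<pi> (P \<omega>) (value_fun r \<gamma> \<pi> (P \<omega>)) s
              - var_next \<pi> (P \<omega>) (\<lambda>s'. \<integral>\<omega>'. value_fun r \<gamma> \<pi> (P \<omega>') s' \<partial>M) s \<partial>M)"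
  proof (rule Bochner_Integration.integral_cong[OF refl])
    fix \<omega> assume \<omega>: "\<omega> \<in> space M"
    have "(\<integral>\<omega>'. W \<omega>' y \<partial>M) = (\<integral>\<omega>'. V \<omega>' y \<partial>M)" if "y \<in> U" for y
      using W_eq_V that by (intro Bochner_Integration.integral_cong) auto
    with W_eq_V[OF \<omega>] \<mu>_U[OF \<omega>] show "weighted_variance (\<mu> \<omega>) (W \<omega>)
        - weighted_variance (\<mu> \<omega>) (\<lambda>y. \<integral>\<omega>'. W \<omega>' y \<partial>M)
      = var_next \<pi> (P \<omega>) (value_fun r \<gamma> \<pi> (P \<omega>)) s
        - var_next \<pi> (P \<omega>) (\<lambda>s'. \<integral>\<omega>'. value_fun r \<gamma> \<pi> (P \<omega>') s' \<partial>M) s"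
      unfolding var_next_eq_weighted_variance \<mu>_def[symmetric] V_def[symmetric]
      by (intro arg_cong2[where f = minus] weighted_variance_cong) auto
  qed
  finally show ?thesis .
qed

theorem lemma7:
  fixes M :: "'w measure"
    and P :: "'w \<Rightarrow> 's::finite \<Rightarrow> 'a::finite \<Rightarrow> 's \<Rightarrow> real"
    and r :: "'s \<Rightarrow> 'a \<Rightarrow> real"
    and \<gamma> :: real
    and \<pi> :: "'s \<Rightarrow> 'a \<Rightarrow> real"
    and s :: 's
  assumes "prob_space M"
    and "\<And>x a y. (\<lambda>\<omega>. P \<omega> x a y) \<in> borel_measurable M"
    and "\<forall>\<omega>\<in>space M. valid_transition (P \<omega>)"
    and "0 \<le> \<gamma>" and "\<gamma> < 1"
    and "valid_policy \<pi>"
    and A1: "indep_transitions M P"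
    and A2: "acyclic_mdp M P"
  shows "(\<integral>\<omega>. var_next \<pi> (P \<omega>) (value_fun r \<gamma> \<pi> (P \<omega>)) s
              - var_next \<pi> (P \<omega>) (\<lambda>s'. \<integral>\<omega>'. value_fun r \<gamma> \<pi> (P \<omega>') s' \<partial>M) s \<partial>M) \<ge> 0"
proof (cases "terminal_state M P s")
  case True
  then have "var_next \<pi> (P \<omega>) f s = 0" if "\<omega> \<in> space M" for \<omega> f
    using var_next_absorbing[OF assms(6)] assms(3) that unfolding terminal_state_def by blast
  then have "(\<integral>\<omega>. var_next \<pi> (P \<omega>) (value_fun r \<gamma> \<pi> (P \<omega>)) s
      - var_next \<pi> (P \<omega>) (\<lambda>s'. \<integral>\<omega>'. value_fun r \<gamma> \<pi> (P \<omega>') s' \<partial>M) s \<partial>M) = (\<integral>\<omega>. 0 \<partial>M)"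
    by (intro Bochner_Integration.integral_cong) auto
  then show ?thesis by simp
next
  case False
  moreover have "0 \<le> P \<omega> x a y" if "\<omega> \<in> space M" for \<omega> x a y
    using assms(3) that unfolding valid_transition_def by blast
  ultimately obtain U where "s \<notin> U" "\<And>\<omega> a y. \<omega> \<in> space M \<Longrightarrow> P \<omega> s a y \<noteq> 0 \<Longrightarrow> y \<in> U"
    "\<And>\<omega>. \<omega> \<in> space M \<Longrightarrow> successor_closed (P \<omega>) U"
    using acyclic_mdp_future_states[OF A2] by blast
  then show ?thesis
    by (intro prob_space.integral_var_next_value_fun_diff_nonneg[OF assms(1)]) (use assms in auto)
qed

end
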